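(* Let $t \geq 1$ be an integer and let $\{(A_i, B_i) : i \in I\}$ be a finite collection of pairs of finite sets (indexed by a finite set $I$) such that: (a) $|A_i \cap B_i| \leq t$ for each $i \in I$; (b) $|A_i \cap B_j| \geq t$ for all $i, j \in I$ with $i \neq j$; (c') if $A_i \cap B_i = A_j \cap B_j$ for some $i \neq j$, then it is not the case that $A_i \cap B_j = A_i \cap B_i = A_j \cap B_i$. Then $$\sum_{i \in I} \binom{|A_i \cup B_i|}{|A_i \setminus B_i|}^{-1} \binom{|B_i|}{|A_i \cap B_i|}^{-1} \leq 1.$$ *)

theory Defs
  imports Complex_Main
begin

end

theory Submission
  imports Defs "HOL-Combinatorics.Multiset_Permutations"
begin

text \<open>
  A Lubell-type permutation count.  Let \<open>U\<close> be the union of all the sets and call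
  a linear order of \<open>U\<close> compatible with \<open>(A, B)\<close> if it lists \<open>A - B\<close>, then \<open>A \<inter> B\<close>, then
  \<open>B - A\<close>, in the relative order of these blocks.  A proportion exactly
  \<open>1 / (binomial |A \<union> B| |A - B| * binomial |B| |A \<inter> B|)\<close> of all orders of \<open>U\<close> is compatible
  with \<open>(A, B)\<close>.  No order is compatible with two pairs \<open>(A\<^sub>i, B\<^sub>i)\<close>, \<open>(A\<^sub>j, B\<^sub>j)\<close>: looking at the
  first element of \<open>B\<^sub>i \<union> B\<^sub>j\<close> and using (a) and (b) forces \<open>A\<^sub>i \<inter> B\<^sub>j = A\<^sub>i \<inter> B\<^sub>i\<close> and
  \<open>A\<^sub>j \<inter> B\<^sub>i = A\<^sub>j \<inter> B\<^sub>j\<close>; the same argument for the reversed order with the roles of \<open>A\<close> and \<open>B\<close>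
  exchanged then contradicts (c').  Hence the proportions sum to at most 1.
\<close>

text \<open>
  For \<open>r = position xs\<close> this says that \<open>xs\<close> lists the blocks \<open>A - B\<close>, \<open>A \<inter> B\<close>,
  \<open>B - A\<close> in this order.
\<close>

definition ranked_before :: "('a \<Rightarrow> 'b::linorder) \<Rightarrow> 'a set \<Rightarrow> 'a set \<Rightarrow> bool" where
  "ranked_before r A B \<longleftrightarrow> (\<forall>x\<in>A. \<forall>y\<in>B. x \<notin> B \<or> y \<notin> A \<longrightarrow> r x < r y)"

lemma ranked_before_uminus:
  fixes r :: "'a \<Rightarrow> 'b::linordered_ab_group_add"
  shows "ranked_before (\<lambda>x. - r x) B A \<longleftrightarrow> ranked_before r A B"
  unfolding ranked_before_def by auto

lemma subset_eq_if_card_bounds: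
  assumes "finite B" "A \<subseteq> B" "card B \<le> t" "t \<le> card A"
  shows "A = B"
  using assms card_mono[OF assms(1,2)] by (intro card_subset_eq) auto

lemma ranked_before_least_of_Un:
  assumes r: "ranked_before r Ai Bi" and e: "e \<in> Bi" "\<forall>y\<in>Bj. r e \<le> r y"
    and "finite Bi" "card (Ai \<inter> Bi) \<le> t" "t \<le> card (Ai \<inter> Bj)" "t \<ge> 1"
  shows "Ai \<inter> Bj = Ai \<inter> Bi \<and> e \<in> Ai"
proof
  have "Ai \<inter> Bj \<subseteq> Ai \<inter> Bi"
    using r e unfolding ranked_before_def by (force simp: not_less[symmetric])
  then show eq: "Ai \<inter> Bj = Ai \<inter> Bi"
    using assms by (intro subset_eq_if_card_bounds) auto
  have "Ai \<inter> Bj \<noteq> {}"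
    using \<open>t \<le> card (Ai \<inter> Bj)\<close> \<open>t \<ge> 1\<close> by auto
  then obtain z where "z \<in> Ai \<inter> Bj" by blast
  then show "e \<in> Ai"
    using r e unfolding ranked_before_def by (force simp: not_less[symmetric])
qed

lemma ranked_before_cross_intersections:
  fixes r :: "'a \<Rightarrow> 'b::linorder"
  assumes ri: "ranked_before r Ai Bi" and rj: "ranked_before r Aj Bj"
    and fin: "finite Bi" "finite Bj" and "t \<ge> 1"
    and "card (Ai \<inter> Bi) \<le> t" "card (Aj \<inter> Bj) \<le> t"
    and "t \<le> card (Ai \<inter> Bj)" "t \<le> card (Aj \<inter> Bi)"
  shows "Ai \<inter> Bj = Ai \<inter> Bi \<and> Aj \<inter> Bi = Aj \<inter> Bj"
proof -
  have "Bi \<union> Bj \<noteq> {}"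
    using \<open>t \<le> card (Ai \<inter> Bj)\<close> \<open>t \<ge> 1\<close> by auto
  then obtain e where e: "e \<in> Bi \<union> Bj" "\<forall>y\<in>Bi \<union> Bj. r e \<le> r y"
    using ex_is_arg_min_if_finite[of "Bi \<union> Bj" r] fin
    by (auto simp: is_arg_min_def not_less)
  note least_i = ranked_before_least_of_Un[OF ri _ _ fin(1) assms(6) assms(8) assms(5)]
  note least_j = ranked_before_least_of_Un[OF rj _ _ fin(2) assms(7) assms(9) assms(5)]
  have "e \<in> Bi \<and> e \<in> Bj"
    using e least_i least_j by blast
  then show ?thesis
    using e least_i least_j by blast
qed

lemma ranked_before_common_intersections:
  fixes r :: "'a \<Rightarrow> 'b::linordered_ab_group_add"
  assumes "ranked_before r Ai Bi" "ranked_before r Aj Bj"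
    and "finite Ai" "finite Aj" "finite Bi" "finite Bj" "t \<ge> 1"
    and "card (Ai \<inter> Bi) \<le> t" "card (Aj \<inter> Bj) \<le> t"
    and "t \<le> card (Ai \<inter> Bj)" "t \<le> card (Aj \<inter> Bi)"
  shows "Ai \<inter> Bi = Aj \<inter> Bj \<and> Ai \<inter> Bj = Ai \<inter> Bi \<and> Ai \<inter> Bi = Aj \<inter> Bi"
proof -
  have "Ai \<inter> Bj = Ai \<inter> Bi \<and> Aj \<inter> Bi = Aj \<inter> Bj"
    using assms by (intro ranked_before_cross_intersections[of r]) auto
  moreover have "Bi \<inter> Aj = Bi \<inter> Ai \<and> Bj \<inter> Ai = Bj \<inter> Aj"
    using assms
    by (intro ranked_before_cross_intersections[of "\<lambda>x. - r x" Bi Ai Bj Aj t])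
       (auto simp: ranked_before_uminus Int_commute)
  ultimately show ?thesis by blast
qed

fun position :: "'a list \<Rightarrow> 'a \<Rightarrow> nat" where
  "position [] y = 0"
| "position (x # xs) y = (if x = y then 0 else Suc (position xs y))"

lemma ranked_before_position_Cons:
  "ranked_before (position (x # xs)) A B \<longleftrightarrow>
     (x \<in> B \<longrightarrow> (\<forall>p\<in>A - {x}. p \<in> B \<and> x \<in> A)) \<and> ranked_before (position xs) (A - {x}) (B - {x})"
  unfolding ranked_before_def by (auto split: if_splits)

definition ordered_perms :: "'a set \<Rightarrow> 'a set \<Rightarrow> 'a set \<Rightarrow> 'a set \<Rightarrow> 'a list set" where
  "ordered_perms U X Y Z =
     {xs \<in> permutations_of_set U. ranked_before (position xs) (X \<union> Y) (Y \<union> Z)}"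

definition first_block :: "'a set \<Rightarrow> 'a set \<Rightarrow> 'a set \<Rightarrow> 'a set" where
  "first_block X Y Z = (if X \<noteq> {} then X else if Y \<noteq> {} then Y else Z)"

lemma ordered_perms_first_element:
  assumes "U \<noteq> {}" "X \<inter> Y = {}" "X \<inter> Z = {}" "Y \<inter> Z = {}" "X \<union> Y \<union> Z \<subseteq> U"
  shows "ordered_perms U X Y Z =
    (\<Union>x\<in>(U - (X \<union> Y \<union> Z)) \<union> first_block X Y Z.
       (#) x ` ordered_perms (U - {x}) (X - {x}) (Y - {x}) (Z - {x}))"
proof -
  define F where "F = (U - (X \<union> Y \<union> Z)) \<union> first_block X Y Z"
  have admissible: "(x \<in> Y \<union> Z \<longrightarrow> (\<forall>p\<in>X \<union> Y - {x}. p \<in> Y \<union> Z \<and> x \<in> X \<union> Y)) \<longleftrightarrow> x \<in> F"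
    if "x \<in> U" for x
    using that assms unfolding F_def first_block_def by auto
  have "ordered_perms U X Y Z = (\<Union>x\<in>U. (#) x ` {ys \<in> permutations_of_set (U - {x}).
          ranked_before (position (x # ys)) (X \<union> Y) (Y \<union> Z)})"
    unfolding ordered_perms_def by (subst permutations_of_set_nonempty[OF assms(1)]) blast
  also have "\<dots> = (\<Union>x\<in>U. (#) x ` {ys \<in> permutations_of_set (U - {x}).
          x \<in> F \<and> ranked_before (position ys) (X \<union> Y - {x}) (Y \<union> Z - {x})})"
    by (intro SUP_cong refl arg_cong[where f = "image _"] Collect_cong)
       (simp only: ranked_before_position_Cons admissible)
  also have "\<dots> = (\<Union>x\<in>F. (#) x ` ordered_perms (U - {x}) (X - {x}) (Y - {x}) (Z - {x}))"
  proof -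
    have "F \<subseteq> U"
      using assms(5) unfolding F_def first_block_def by auto
    then show ?thesis
      unfolding ordered_perms_def by (auto simp: Un_Diff)
  qed
  finally show ?thesis unfolding F_def .
qed

lemma card_ordered_perms_first_element:
  assumes "finite U" "U \<noteq> {}" "X \<inter> Y = {}" "X \<inter> Z = {}" "Y \<inter> Z = {}" "X \<union> Y \<union> Z \<subseteq> U"
  shows "card (ordered_perms U X Y Z) =
    (\<Sum>x\<in>(U - (X \<union> Y \<union> Z)) \<union> first_block X Y Z.
       card (ordered_perms (U - {x}) (X - {x}) (Y - {x}) (Z - {x})))"
proof -
  have "first_block X Y Z \<subseteq> U"
    using assms(6) unfolding first_block_def by auto
  then show ?thesis
    unfolding ordered_perms_first_element[OF assms(2-)] using assms(1)
    by (subst card_UN_disjoint)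
       (auto simp: card_image ordered_perms_def intro!: sum.cong finite_subset[OF _ assms(1)])
qed

lemma card_mult_fact_card_Diff_singleton:
  "finite K \<Longrightarrow> x \<in> K \<Longrightarrow> card K * fact (card (K - {x})) = fact (card K)"
  by (metis card_Suc_Diff1 fact_Suc mult_of_nat_commute of_nat_id)

lemma first_block_remove:
  assumes "finite X" "finite Y" "finite Z" "X \<inter> Y = {}" "X \<inter> Z = {}" "Y \<inter> Z = {}"
    and x: "x \<in> first_block X Y Z"
  shows "Suc (card (X - {x}) + card (Y - {x}) + card (Z - {x})) = card X + card Y + card Z"
    and "card (first_block X Y Z) * (fact (card (X - {x})) * fact (card (Y - {x})) * fact (card (Z - {x})))
           = fact (card X) * fact (card Y) * fact (card Z)"
proof -
  let ?P = "\<lambda>X Y Z. fact (card X) * fact (card Y) * fact (card Z) :: nat"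
  consider "first_block X Y Z = X" "x \<in> X" "Y - {x} = Y" "Z - {x} = Z"
    | "first_block X Y Z = Y" "x \<in> Y" "X - {x} = X" "Z - {x} = Z"
    | "first_block X Y Z = Z" "x \<in> Z" "X - {x} = X" "Y - {x} = Y"
    using x assms(4-6) unfolding first_block_def by (auto split: if_splits)
  then have "Suc (card (X - {x}) + card (Y - {x}) + card (Z - {x})) = card X + card Y + card Z
      \<and> card (first_block X Y Z) * ?P (X - {x}) (Y - {x}) (Z - {x}) = ?P X Y Z"
  proof cases
    case 1
    with card_mult_fact_card_Diff_singleton[OF assms(1) 1(2)] show ?thesis
      using assms(1) card_gt_0_iff[of X] 1(2) by (auto simp: mult.assoc)
  next
    case 2
    with card_mult_fact_card_Diff_singleton[OF assms(2) 2(2)] show ?thesis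
      using assms(2) card_gt_0_iff[of Y] 2(2) by (auto simp: mult.left_commute)
  next
    case 3
    with card_mult_fact_card_Diff_singleton[OF assms(3) 3(2)] show ?thesis
      using assms(3) card_gt_0_iff[of Z] 3(2) by (auto simp: mult.left_commute mult.commute)
  qed
  then show "Suc (card (X - {x}) + card (Y - {x}) + card (Z - {x})) = card X + card Y + card Z"
    and "card (first_block X Y Z) * ?P (X - {x}) (Y - {x}) (Z - {x}) = ?P X Y Z"
    by blast+
qed

lemma sum_first_block_mult_fact:
  assumes fin: "finite X" "finite Y" "finite Z" and disj: "X \<inter> Y = {}" "X \<inter> Z = {}" "Y \<inter> Z = {}"
    and g: "\<And>x. x \<in> first_block X Y Z \<Longrightarrow>
      g x * fact (card (X - {x}) + card (Y - {x}) + card (Z - {x}))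
        = c * (fact (card (X - {x})) * fact (card (Y - {x})) * fact (card (Z - {x})))"
  shows "(\<Sum>x\<in>first_block X Y Z. g x) * fact (card X + card Y + card Z)
           = (card X + card Y + card Z) * (c * (fact (card X) * fact (card Y) * fact (card Z)))"
proof -
  let ?P = "\<lambda>X Y Z. fact (card X) * fact (card Y) * fact (card Z) :: nat"
  define D where "D = first_block X Y Z"
  define w where "w = card X + card Y + card Z"
  have "card D * (g x * fact w) = w * (c * ?P X Y Z)" if "x \<in> D" for x
  proof -
    note drop = first_block_remove[OF fin disj that[unfolded D_def]]
    let ?w' = "card (X - {x}) + card (Y - {x}) + card (Z - {x})"
    have "card D * (g x * fact w) = w * (card D * (g x * fact ?w'))"
      unfolding w_def drop(1)[symmetric] by (simp only: fact_Suc of_nat_id ac_simps)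
    also have "\<dots> = w * (c * (card D * ?P (X - {x}) (Y - {x}) (Z - {x})))"
      unfolding g[OF that[unfolded D_def]] by (simp only: ac_simps)
    also have "\<dots> = w * (c * ?P X Y Z)"
      by (simp only: drop(2)[folded D_def])
    finally show ?thesis .
  qed
  then have "card D * ((\<Sum>x\<in>D. g x) * fact w) = card D * (w * (c * ?P X Y Z))"
    by (simp add: sum_distrib_left sum_distrib_right)
  moreover have "finite D"
    using fin unfolding D_def first_block_def by simp
  moreover have "w = 0" if "D = {}"
    using that unfolding D_def first_block_def w_def by (auto split: if_splits)
  ultimately show ?thesis
    unfolding D_def[symmetric] w_def[symmetric] by (cases "D = {}") auto
qed

lemma card_ordered_perms:
  assumes "finite U" "X \<inter> Y = {}" "X \<inter> Z = {}" "Y \<inter> Z = {}" "X \<union> Y \<union> Z \<subseteq> U"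
  shows "card (ordered_perms U X Y Z) * fact (card X + card Y + card Z)
           = fact (card U) * (fact (card X) * fact (card Y) * fact (card Z))"
  using assms
proof (induction "card U" arbitrary: U X Y Z)
  case 0
  then show ?case
    by (simp add: ordered_perms_def ranked_before_def)
next
  case (Suc n)
  let ?G = "\<lambda>x. card (ordered_perms (U - {x}) (X - {x}) (Y - {x}) (Z - {x}))"
  let ?P = "\<lambda>X Y Z. fact (card X) * fact (card Y) * fact (card Z) :: nat"
  define W where "W = X \<union> Y \<union> Z"
  define D where "D = first_block X Y Z"
  define w where "w = card X + card Y + card Z"
  have fin: "finite X" "finite Y" "finite Z"
    using Suc.prems finite_subset by auto
  then have "finite D"
    unfolding D_def first_block_def by simp
  have "D \<subseteq> W"
    unfolding D_def W_def first_block_def by auto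
  have card_W: "card W = w"
    using Suc.prems fin unfolding W_def w_def by (simp add: card_Un_disjoint Int_Un_distrib2)
  have IH: "?G x * fact (card (X - {x}) + card (Y - {x}) + card (Z - {x}))
              = fact n * ?P (X - {x}) (Y - {x}) (Z - {x})" if "x \<in> U" for x
  proof -
    have n: "n = card (U - {x})"
      using Suc.hyps(2) Suc.prems(1) that by simp
    show ?thesis
      unfolding n using Suc.prems by (intro Suc.hyps(1)[OF n]) auto
  qed
  have outside: "(\<Sum>x\<in>U - W. ?G x) * fact w = (card U - w) * (fact n * ?P X Y Z)"
  proof -
    have "?G x * fact w = fact n * ?P X Y Z" if "x \<in> U - W" for x
      using IH[of x] that unfolding W_def w_def by (simp add: insert_absorb)
    then have "(\<Sum>x\<in>U - W. ?G x) * fact w = card (U - W) * (fact n * ?P X Y Z)"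
      by (simp add: sum_distrib_right)
    then show ?thesis
      using card_Diff_subset[of W U] card_W fin Suc.prems unfolding W_def by simp
  qed
  have first: "(\<Sum>x\<in>D. ?G x) * fact w = w * (fact n * ?P X Y Z)"
    unfolding D_def w_def
  proof (rule sum_first_block_mult_fact[OF fin Suc.prems(2-4)])
    show "?G x * fact (card (X - {x}) + card (Y - {x}) + card (Z - {x}))
            = fact n * ?P (X - {x}) (Y - {x}) (Z - {x})" if "x \<in> first_block X Y Z" for x
      using IH that \<open>D \<subseteq> W\<close> Suc.prems(5) unfolding D_def W_def by blast
  qed
  have "U \<noteq> {}"
    using Suc.hyps(2) by auto
  then have "card (ordered_perms U X Y Z) = (\<Sum>x\<in>U - W. ?G x) + (\<Sum>x\<in>D. ?G x)"
    using card_ordered_perms_first_element[OF Suc.prems(1) _ Suc.prems(2-)] Suc.prems(1) fin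
      \<open>finite D\<close> \<open>D \<subseteq> W\<close>
    unfolding W_def D_def by (subst (asm) sum.union_disjoint) auto
  then have "card (ordered_perms U X Y Z) * fact w = card U * (fact n * ?P X Y Z)"
    using outside first card_W card_mono[OF Suc.prems(1) Suc.prems(5)]
    unfolding W_def by (simp add: distrib_right add_mult_distrib[symmetric])
  then show ?case
    using Suc.hyps(2)[symmetric] unfolding w_def by (simp add: algebra_simps)
qed

lemma inverse_binomials_eq_ordered_perms_ratio:
  assumes "finite U" "A \<union> B \<subseteq> U"
  shows "1 / (real (card (A \<union> B) choose card (A - B)) * real (card B choose card (A \<inter> B)))
           = real (card (ordered_perms U (A - B) (A \<inter> B) (B - A))) / fact (card U)"
proof -
  define a c d where "a = card (A - B)" and "c = card (A \<inter> B)" and "d = card (B - A)"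
  have fin: "finite A" "finite B"
    using assms finite_subset by auto
  have "card B = card ((A \<inter> B) \<union> (B - A))"
    by (rule arg_cong[where f = card]) auto
  also have "\<dots> = c + d"
    using fin unfolding c_def d_def by (intro card_Un_disjoint) auto
  finally have card_B: "card B = c + d" .
  have "card (A \<union> B) = card ((A - B) \<union> B)"
    by (rule arg_cong[where f = card]) auto
  also have "\<dots> = a + (c + d)"
    using fin card_B unfolding a_def by (subst card_Un_disjoint) auto
  finally have card_AB: "card (A \<union> B) = a + (c + d)" .
  have inverse: "1 / (real (card (A \<union> B) choose card (A - B)) * real (card B choose card (A \<inter> B)))
          = fact a * fact c * fact d / fact (a + c + d)"
    unfolding card_AB card_B a_def [symmetric] c_def [symmetric]
    by (simp add: binomial_fact add.assoc)
  have "card (ordered_perms U (A - B) (A \<inter> B) (B - A)) * fact (a + c + d)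
          = fact (card U) * (fact a * fact c * fact d)"
    using card_ordered_perms[of U "A - B" "A \<inter> B" "B - A"] assms
    unfolding a_def c_def d_def by auto
  then have "real (card (ordered_perms U (A - B) (A \<inter> B) (B - A))) * fact (a + c + d)
          = fact (card U) * (fact a * fact c * fact d)"
    by (metis of_nat_fact of_nat_mult)
  then have "real (card (ordered_perms U (A - B) (A \<inter> B) (B - A))) / fact (card U)
          = fact a * fact c * fact d / fact (a + c + d)"
    by (simp add: field_simps)
  with inverse show ?thesis
    by simp
qed

lemma ordered_perms_Diff_Int:
  "ordered_perms U (A - B) (A \<inter> B) (B - A) = {xs \<in> permutations_of_set U. ranked_before (position xs) A B}"
proof -
  have "(A - B) \<union> (A \<inter> B) = A" "(A \<inter> B) \<union> (B - A) = B"
    by auto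
  then show ?thesis
    unfolding ordered_perms_def by simp
qed

lemma ordered_perms_Diff_Int_disjoint:
  assumes "finite Ai" "finite Aj" "finite Bi" "finite Bj" "t \<ge> 1"
    and "card (Ai \<inter> Bi) \<le> t" "card (Aj \<inter> Bj) \<le> t"
    and "t \<le> card (Ai \<inter> Bj)" "t \<le> card (Aj \<inter> Bi)"
    and "\<not> (Ai \<inter> Bi = Aj \<inter> Bj \<and> Ai \<inter> Bj = Ai \<inter> Bi \<and> Ai \<inter> Bi = Aj \<inter> Bi)"
  shows "ordered_perms U (Ai - Bi) (Ai \<inter> Bi) (Bi - Ai) \<inter> ordered_perms U (Aj - Bj) (Aj \<inter> Bj) (Bj - Aj) = {}"
proof (rule ccontr)
  assume "ordered_perms U (Ai - Bi) (Ai \<inter> Bi) (Bi - Ai) \<inter> ordered_perms U (Aj - Bj) (Aj \<inter> Bj) (Bj - Aj) \<noteq> {}"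
  then obtain xs where "ranked_before (position xs) Ai Bi" "ranked_before (position xs) Aj Bj"
    unfolding ordered_perms_Diff_Int by blast
  \<comment> \<open>pass to \<open>int\<close> so that the ranking can be negated\<close>
  then have "ranked_before (\<lambda>x. int (position xs x)) Ai Bi"
    and "ranked_before (\<lambda>x. int (position xs x)) Aj Bj"
    unfolding ranked_before_def by auto
  from ranked_before_common_intersections[OF this assms(1-9)] assms(10) show False by blast
qed

theorem theorem1p9:
  fixes t :: nat and I :: "'i set" and A B :: "'i \<Rightarrow> 'a set"
  assumes "t \<ge> 1"
    and "finite I"
    and "\<And>i. i \<in> I \<Longrightarrow> finite (A i) \<and> finite (B i)"
    and a: "\<And>i. i \<in> I \<Longrightarrow> card (A i \<inter> B i) \<le> t"
    and b: "\<And>i j. i \<in> I \<Longrightarrow> j \<in> I \<Longrightarrow> i \<noteq> j \<Longrightarrow> card (A i \<inter> B j) \<ge> t"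
    and c: "\<And>i j. i \<in> I \<Longrightarrow> j \<in> I \<Longrightarrow> i \<noteq> j \<Longrightarrow> A i \<inter> B i = A j \<inter> B j \<Longrightarrow>
              \<not> (A i \<inter> B j = A i \<inter> B i \<and> A i \<inter> B i = A j \<inter> B i)"
  shows "(\<Sum>i\<in>I. 1 / (real (card (A i \<union> B i) choose card (A i - B i))
                     * real (card (B i) choose card (A i \<inter> B i)))) \<le> 1"
proof -
  define U where "U = (\<Union>i\<in>I. A i \<union> B i)"
  define S where "S i = ordered_perms U (A i - B i) (A i \<inter> B i) (B i - A i)" for i
  have "finite U"
    unfolding U_def using assms(2,3) by auto
  have disjoint: "\<forall>i\<in>I. \<forall>j\<in>I. i \<noteq> j \<longrightarrow> S i \<inter> S j = {}"
  proof (intro ballI impI)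
    fix i j assume ij: "i \<in> I" "j \<in> I" "i \<noteq> j"
    then show "S i \<inter> S j = {}"
      unfolding S_def using assms(1,3) a[OF ij(1)] a[OF ij(2)] b[OF ij] b[OF ij(2,1)] c[OF ij]
      by (intro ordered_perms_Diff_Int_disjoint[where t = t]) auto
  qed
  have "(\<Sum>i\<in>I. 1 / (real (card (A i \<union> B i) choose card (A i - B i))
                     * real (card (B i) choose card (A i \<inter> B i))))
        = (\<Sum>i\<in>I. real (card (S i))) / fact (card U)"
    unfolding S_def sum_divide_distrib
    by (intro sum.cong refl inverse_binomials_eq_ordered_perms_ratio \<open>finite U\<close>) (auto simp: U_def)
  also have "(\<Sum>i\<in>I. real (card (S i))) = real (card (\<Union>i\<in>I. S i))"
    using card_UN_disjoint[OF assms(2) _ disjoint]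
    by (simp add: S_def ordered_perms_def)
  also have "real (card (\<Union>i\<in>I. S i)) / fact (card U)
             \<le> real (card (permutations_of_set U)) / fact (card U)"
    by (intro divide_right_mono of_nat_mono card_mono) (auto simp: S_def ordered_perms_Diff_Int)
  also have "\<dots> = 1"
    using \<open>finite U\<close> by simp
  finally show ?thesis .
qed

end
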